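(* Let $\Sigma = (|\Sigma|, (\sigma^\alpha, M^\alpha)_\alpha)$ be a cone complex with integral structure, $N^\alpha=(M^\alpha)^\vee$, let $N$ be a lattice, and let $\varphi: |\Sigma| \to N_\mathbf{R}$ be a map whose restriction to each $\sigma^\alpha$ is induced by a map of lattices $N^\alpha \to N$. If $\sigma$ is a cone in $N$, $\Sigma'$ is a subdivision of $\Sigma$, and $\Sigma$ has $\sigma$-compatible geometric tropicalization with respect to $\varphi$, then $\Sigma'$ has $\sigma$-compatible geometric tropicalization with respect to $\varphi$.
   Context: Cones are rational polyhedral pointed cones. A cone complex with integral structure (in the sense of Kempf–Knudsen–Mumford–Saint-Donat) is a topological space $|\Sigma|$ that is a union of cones $\sigma^\alpha\subset N^\alpha_\mathbf{R}$ (each with integral structure from a lattice $M^\alpha$ of linear functions) glued along faces compatibly with integral structures. A subdivision $\Sigma'$ of $\Sigma$ is a cone complex with integral structure with $|\Sigma'|=|\Sigma|$ such that each cone of $\Sigma'$ is contained in a cone of $\Sigma$ with compatible integral structure and each cone of $\Sigma$ is a union of cones of $\Sigma'$. $\Sigma$ has $\sigma$-compatible geometric tropicalization with respect to $\varphi$ if for each index $\alpha$, $\varphi^{-1}(\sigma)\cap\sigma^\alpha$ is a face of $\sigma^\alpha$. *)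

theory Defs
  imports "HOL-Analysis.Analysis"
begin

definition coords :: "nat \<Rightarrow> (nat \<Rightarrow> 'x \<Rightarrow> real) \<Rightarrow> 'x \<Rightarrow> (nat \<Rightarrow> real)" where
  "coords d b x = (\<lambda>j. if j < d then b j x else 0)"

(* K is a rational polyhedral pointed cone in R^d = {v :: nat \<Rightarrow> real. \<forall>j\<ge>d. v j = 0}
   (lattice Z^d): the nonnegative span of finitely many integral vectors, containing no line. *)
definition rpp_cone :: "nat \<Rightarrow> (nat \<Rightarrow> real) set \<Rightarrow> bool" where
  "rpp_cone d K \<longleftrightarrow>
     (\<exists>V. finite V \<and> (\<forall>v\<in>V. (\<forall>j. v j \<in> \<int>) \<and> (\<forall>j\<ge>d. v j = 0)) \<and>
          K = {(\<lambda>j. \<Sum>v\<in>V. c v * v j) | c. \<forall>v\<in>V. c v \<ge> 0}) \<and>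
     (\<forall>x\<in>K. (\<lambda>j. - x j) \<in> K \<longrightarrow> x = (\<lambda>j. 0))"

definition int_lattice_on :: "'x set \<Rightarrow> ('x \<Rightarrow> real) set \<Rightarrow> nat \<Rightarrow> (nat \<Rightarrow> 'x \<Rightarrow> real) \<Rightarrow> bool" where
  "int_lattice_on S M d b \<longleftrightarrow>
     M = {(\<lambda>x\<in>S. \<Sum>j<d. of_int (k j) * b j x) | k :: nat \<Rightarrow> int. True} \<and>
     (\<forall>k :: nat \<Rightarrow> int. (\<forall>x\<in>S. (\<Sum>j<d. of_int (k j) * b j x) = 0) \<longrightarrow> (\<forall>j<d. k j = 0))"

(* (S, M) is a rational polyhedral pointed cone with integral structure inside the space T
   (KKMS): S closed, M \<cong> Z^d a lattice of functions on S, and the evaluation map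
   S \<rightarrow> Hom(M,R) = R^d is a homeomorphism onto a rational polyhedral pointed cone. *)
definition int_cone :: "'x topology \<Rightarrow> 'x set \<Rightarrow> ('x \<Rightarrow> real) set \<Rightarrow> bool" where
  "int_cone T S M \<longleftrightarrow> closedin T S \<and>
     (\<exists>d b. int_lattice_on S M d b \<and> rpp_cone d (coords d b ` S) \<and>
            homeomorphic_map (subtopology T S) (subtopology euclidean (coords d b ` S)) (coords d b))"

(* Faces of (S, M): F = S \<inter> m^\<perp> for some m \<in> M nonnegative on S (Fulton's definition). *)
definition is_face :: "'x set \<Rightarrow> ('x \<Rightarrow> real) set \<Rightarrow> 'x set \<Rightarrow> bool" where
  "is_face S M F \<longleftrightarrow> (\<exists>m\<in>M. (\<forall>x\<in>S. m x \<ge> 0) \<and> F = {x\<in>S. m x = 0})"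

definition res :: "('x \<Rightarrow> real) set \<Rightarrow> 'x set \<Rightarrow> ('x \<Rightarrow> real) set" where
  "res M F = (\<lambda>m. restrict m F) ` M"

(* Cone complex with integral structure on the space T, cones indexed by the pairs (\<sigma>^\<alpha>, M^\<alpha>). *)
definition cone_complex :: "'x topology \<Rightarrow> ('x set \<times> ('x \<Rightarrow> real) set) set \<Rightarrow> bool" where
  "cone_complex T \<Sigma> \<longleftrightarrow>
     (\<forall>(S, M)\<in>\<Sigma>. int_cone T S M) \<and>
     topspace T = \<Union> (fst ` \<Sigma>) \<and>
     (\<forall>(S, M)\<in>\<Sigma>. \<forall>F. is_face S M F \<longrightarrow> (\<exists>M'. (F, M') \<in> \<Sigma> \<and> M' = res M F)) \<and>
     (\<forall>(S, M)\<in>\<Sigma>. \<forall>(S', M')\<in>\<Sigma>.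
        S \<inter> S' = \<Union> {F. is_face S M F \<and> is_face S' M' F \<and> res M F = res M' F})"

definition subdivision :: "'x topology \<Rightarrow> ('x set \<times> ('x \<Rightarrow> real) set) set \<Rightarrow>
    ('x set \<times> ('x \<Rightarrow> real) set) set \<Rightarrow> bool" where
  "subdivision T \<Sigma>' \<Sigma> \<longleftrightarrow> cone_complex T \<Sigma>' \<and>
     (\<forall>(\<tau>, M')\<in>\<Sigma>'. \<exists>(S, M)\<in>\<Sigma>. \<tau> \<subseteq> S \<and> M' = res M \<tau>) \<and>
     (\<forall>(S, M)\<in>\<Sigma>. S = \<Union> {\<tau>\<in>fst ` \<Sigma>'. \<tau> \<subseteq> S})"

definition rpp_cone_N :: "(real ^ 'n) set \<Rightarrow> bool" where
  "rpp_cone_N \<sigma> \<longleftrightarrow>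
     (\<exists>V. finite V \<and> (\<forall>v\<in>V. \<forall>i. v $ i \<in> \<int>) \<and>
          \<sigma> = {(\<Sum>v\<in>V. c v *\<^sub>R v) | c. \<forall>v\<in>V. c v \<ge> 0}) \<and>
     \<sigma> \<inter> uminus ` \<sigma> = {0}"

(* \<phi> restricted to each cone \<sigma>^\<alpha> is induced by a lattice map N^\<alpha> \<rightarrow> N = Z^n,
   i.e. each coordinate of \<phi> on \<sigma>^\<alpha> is an element of M^\<alpha> = Hom(N^\<alpha>, Z). *)
definition lattice_induced :: "('x set \<times> ('x \<Rightarrow> real) set) set \<Rightarrow> ('x \<Rightarrow> real ^ 'n) \<Rightarrow> bool" where
  "lattice_induced \<Sigma> \<phi> \<longleftrightarrow>
     (\<forall>(S, M)\<in>\<Sigma>. \<forall>i. \<exists>m\<in>M. \<forall>x\<in>S. \<phi> x $ i = m x)"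

definition geom_trop_compatible :: "('x set \<times> ('x \<Rightarrow> real) set) set \<Rightarrow> ('x \<Rightarrow> real ^ 'n) \<Rightarrow>
    (real ^ 'n) set \<Rightarrow> bool" where
  "geom_trop_compatible \<Sigma> \<phi> \<sigma> \<longleftrightarrow> (\<forall>(S, M)\<in>\<Sigma>. is_face S M (\<phi> -` \<sigma> \<inter> S))"

end

theory Submission
  imports Defs
begin

lemma is_face_res:
  assumes "is_face S M F" and "\<tau> \<subseteq> S"
  shows "is_face \<tau> (res M \<tau>) (F \<inter> \<tau>)"
proof -
  obtain m where m: "m \<in> M" "\<forall>x\<in>S. m x \<ge> 0" "F = {x\<in>S. m x = 0}"
    using assms(1) unfolding is_face_def by blast
  have "restrict m \<tau> \<in> res M \<tau>"
    using m(1) unfolding res_def by blast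
  moreover have "\<forall>x\<in>\<tau>. restrict m \<tau> x \<ge> 0"
    using m(2) assms(2) by auto
  moreover have "F \<inter> \<tau> = {x\<in>\<tau>. restrict m \<tau> x = 0}"
    using m(3) assms(2) by auto
  ultimately show ?thesis
    unfolding is_face_def by blast
qed

text \<open>Only the subdivision and the compatibility of \<open>\<Sigma>\<close> are needed: every cone of \<open>\<Sigma>'\<close>
  lies in a cone of \<open>\<Sigma>\<close> with the restricted lattice, and faces restrict to faces.\<close>

theorem lemma5p9:
  fixes T :: "'x topology"
    and \<Sigma> \<Sigma>' :: "('x set \<times> ('x \<Rightarrow> real) set) set"
    and \<phi> :: "'x \<Rightarrow> real ^ 'n"
    and \<sigma> :: "(real ^ 'n) set"
  assumes "cone_complex T \<Sigma>"
    and "lattice_induced \<Sigma> \<phi>"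
    and "rpp_cone_N \<sigma>"
    and "subdivision T \<Sigma>' \<Sigma>"
    and "geom_trop_compatible \<Sigma> \<phi> \<sigma>"
  shows "geom_trop_compatible \<Sigma>' \<phi> \<sigma>"
  unfolding geom_trop_compatible_def
proof (clarify)
  fix \<tau> M'
  assume "(\<tau>, M') \<in> \<Sigma>'"
  then obtain S M where SM: "(S, M) \<in> \<Sigma>" "\<tau> \<subseteq> S" "M' = res M \<tau>"
    using assms(4) unfolding subdivision_def by fastforce
  have "is_face S M (\<phi> -` \<sigma> \<inter> S)"
    using assms(5) SM(1) unfolding geom_trop_compatible_def by fastforce
  then have "is_face \<tau> (res M \<tau>) (\<phi> -` \<sigma> \<inter> S \<inter> \<tau>)"
    using SM(2) by (rule is_face_res)
  moreover have "\<phi> -` \<sigma> \<inter> S \<inter> \<tau> = \<phi> -` \<sigma> \<inter> \<tau>"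
    using SM(2) by blast
  ultimately show "is_face \<tau> M' (\<phi> -` \<sigma> \<inter> \<tau>)"
    using SM(3) by simp
qed

end
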